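(* For every basic patterns (graphs) $P_1$ and $P_2$, the basic pattern $P_1\cup P_2$ is equivalent to the pattern $P_1\ \mathrm{JOIN}\ P_2$ and to the pattern $P_2\ \mathrm{JOIN}\ P_1$; that is, for every graph $G$ the three patterns have the same value over $G$.
   Context: Labels $\mathcal{L}$ are the disjoint union of constants $\mathcal{C}$ and variables $\mathcal{V}$. A graph $X$ consists of a set of nodes $X_N\subseteq\mathcal{L}$ and a set of triples $X_T\subseteq\mathcal{L}^3$ whose subjects and objects are nodes (isolated nodes allowed); its labels $\mathcal{L}(X)$ are its nodes and predicates, $\mathcal{V}(X)=\mathcal{V}\cap\mathcal{L}(X)$; the union $X_1\cup X_2$ is componentwise union of nodes and triples. A match $m:X\to G$ is a function $\mathcal{L}(X)\to\mathcal{L}(G)$ mapping nodes to nodes, triples (componentwise) to triples, and fixing every constant; a set of matches all from $X$ to $G$ is written $\underline{m}:X\Rightarrow G$ (a set of matches is determined by its domain graph, codomain graph and underlying functions). Two matches $m_1:X_1\to G_1$, $m_2:X_2\to G_2$ are compatible if they agree on $\mathcal{V}(X_1)\cap\mathcal{V}(X_2)$, and then $m_1\bowtie m_2:X_1\cup X_2\to G_1\cup G_2$ is the match agreeing with $m_1$ on $\mathcal{L}(X_1)$ and $m_2$ on $\mathcal{L}(X_2)$. For $\underline{m}:X\Rightarrow G$ and $\underline{p}:Y\Rightarrow H$, $\mathrm{Join}(\underline{m},\underline{p})=\{m\bowtie p\mid m\in\underline{m},p\in\underline{p},m\text{ and }p\text{ compatible}\}:X\cup Y\Rightarrow G\cup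 H$. The value of a basic pattern (graph) $P$ over a graph $G$ is the set of all matches from $P$ to $G$, as a set of matches $P\Rightarrow G$. The value of $P_1\ \mathrm{JOIN}\ P_2$ over $G$ is $\mathrm{Join}(\underline{m}_1,\underline{m}_2)$ where $\underline{m}_1:X_1\Rightarrow G_1$ is the value of $P_1$ over $G$ and $\underline{m}_2$ is the value of $P_2$ over $G_1$. Two patterns are equivalent if they have the same value (same set of matches with same domain and codomain graphs) over every graph $G$. *)

theory Defs
  imports Main
begin

datatype ('c, 'v) label = Cst 'c | Var 'v

definition is_var :: "('c, 'v) label \<Rightarrow> bool" where
  "is_var l = (\<exists>v. l = Var v)"

record ('c, 'v) graph =
  nodes :: "('c, 'v) label set"
  triples :: "(('c, 'v) label \<times> ('c, 'v) label \<times> ('c, 'v) label) set"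

definition wf_graph :: "('c, 'v) graph \<Rightarrow> bool" where
  "wf_graph X = (\<forall>s p t. (s, p, t) \<in> triples X \<longrightarrow> s \<in> nodes X \<and> t \<in> nodes X)"

definition labels :: "('c, 'v) graph \<Rightarrow> ('c, 'v) label set" where
  "labels X = nodes X \<union> {p. \<exists>s t. (s, p, t) \<in> triples X}"

definition vars :: "('c, 'v) graph \<Rightarrow> ('c, 'v) label set" where
  "vars X = {l \<in> labels X. is_var l}"

definition graph_union :: "('c, 'v) graph \<Rightarrow> ('c, 'v) graph \<Rightarrow> ('c, 'v) graph" where
  "graph_union X Y = \<lparr>nodes = nodes X \<union> nodes Y, triples = triples X \<union> triples Y\<rparr>"

type_synonym ('c, 'v) lmap = "('c, 'v) label \<Rightarrow> ('c, 'v) label option"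

definition is_match :: "('c, 'v) graph \<Rightarrow> ('c, 'v) graph \<Rightarrow> ('c, 'v) lmap \<Rightarrow> bool" where
  "is_match X G m \<longleftrightarrow>
     dom m = labels X \<and>
     (\<forall>n \<in> nodes X. \<exists>n'. m n = Some n' \<and> n' \<in> nodes G) \<and>
     (\<forall>s p t. (s, p, t) \<in> triples X \<longrightarrow>
        (\<exists>s' p' t'. m s = Some s' \<and> m p = Some p' \<and> m t = Some t' \<and> (s', p', t') \<in> triples G)) \<and>
     (\<forall>c. Cst c \<in> labels X \<longrightarrow> m (Cst c) = Some (Cst c))"

record ('c, 'v) mset =
  mdom :: "('c, 'v) graph"
  mcod :: "('c, 'v) graph"
  mfuns :: "('c, 'v) lmap set"

definition compatible :: "('c, 'v) graph \<Rightarrow> ('c, 'v) lmap \<Rightarrow> ('c, 'v) graph \<Rightarrow> ('c, 'v) lmap \<Rightarrow> bool" where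
  "compatible X1 m1 X2 m2 = (\<forall>l \<in> vars X1 \<inter> vars X2. m1 l = m2 l)"

definition match_join :: "('c, 'v) graph \<Rightarrow> ('c, 'v) lmap \<Rightarrow> ('c, 'v) lmap \<Rightarrow> ('c, 'v) lmap" where
  "match_join X1 m1 m2 = (\<lambda>l. if l \<in> labels X1 then m1 l else m2 l)"

definition Join :: "('c, 'v) mset \<Rightarrow> ('c, 'v) mset \<Rightarrow> ('c, 'v) mset" where
  "Join M P = \<lparr>mdom = graph_union (mdom M) (mdom P),
               mcod = graph_union (mcod M) (mcod P),
               mfuns = {match_join (mdom M) m p | m p.
                          m \<in> mfuns M \<and> p \<in> mfuns P \<and> compatible (mdom M) m (mdom P) p}\<rparr>"

datatype ('c, 'v) pattern = Basic "('c, 'v) graph" | JOIN "('c, 'v) pattern" "('c, 'v) pattern"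

fun pvalue :: "('c, 'v) pattern \<Rightarrow> ('c, 'v) graph \<Rightarrow> ('c, 'v) mset" where
  "pvalue (Basic P) G = \<lparr>mdom = P, mcod = G, mfuns = {m. is_match P G m}\<rparr>"
| "pvalue (JOIN P1 P2) G =
     (let M1 = pvalue P1 G in Join M1 (pvalue P2 (mcod M1)))"

definition pat_equiv :: "('c, 'v) pattern \<Rightarrow> ('c, 'v) pattern \<Rightarrow> bool" where
  "pat_equiv P Q = (\<forall>G. wf_graph G \<longrightarrow> pvalue P G = pvalue Q G)"

end

theory Submission
  imports Defs
begin

text \<open>A match of X \<union> Y restricts to matches of X and of Y, which are compatible because
  they come from one function. Conversely, two compatible matches agree on all shared labels
  (on constants because matches fix them, on variables by compatibility), so their join is a
  match of the union. Hence the matches of P1 \<union> P2 are exactly the joins, in either order;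
  and evaluating P2 over the codomain G of the first value changes nothing, since G \<union> G = G.\<close>

lemma labels_graph_union: "labels (graph_union X Y) = labels X \<union> labels Y"
  by (auto simp: labels_def graph_union_def)

lemma graph_union_idem: "graph_union G G = G"
  by (simp add: graph_union_def)

lemma graph_union_commute: "graph_union X Y = graph_union Y X"
  by (auto simp: graph_union_def)

lemma wf_graph_triple_labels:
  assumes "wf_graph X" and "(s, p, t) \<in> triples X"
  shows "s \<in> labels X" "p \<in> labels X" "t \<in> labels X"
  using assms by (auto simp: wf_graph_def labels_def)

lemma is_match_dom: "is_match X G m \<Longrightarrow> dom m = labels X"
  by (simp add: is_match_def)

(* Without wf_graph X, the subject or object of a triple of X need not lie in labels X,
   and the restriction would be undefined there. *)
lemma is_match_restrict:
  assumes f: "is_match Z G f" and X: "wf_graph X"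
    and sub: "nodes X \<subseteq> nodes Z" "triples X \<subseteq> triples Z"
  shows "is_match X G (f |` labels X)"
proof -
  have XZ: "labels X \<subseteq> labels Z"
    using sub by (auto simp: labels_def)
  show ?thesis
    unfolding is_match_def
  proof (intro conjI allI impI ballI)
    show "dom (f |` labels X) = labels X"
      using XZ is_match_dom[OF f] by auto
  next
    fix n assume "n \<in> nodes X"
    then show "\<exists>n'. (f |` labels X) n = Some n' \<and> n' \<in> nodes G"
      using f sub by (auto simp: is_match_def labels_def)
  next
    fix s p t assume "(s, p, t) \<in> triples X"
    then show "\<exists>s' p' t'. (f |` labels X) s = Some s' \<and> (f |` labels X) p = Some p' \<and>
        (f |` labels X) t = Some t' \<and> (s', p', t') \<in> triples G"
      using f sub wf_graph_triple_labels[OF X] unfolding is_match_def by auto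
  next
    fix c assume "Cst c \<in> labels X"
    then show "(f |` labels X) (Cst c) = Some (Cst c)"
      using f XZ unfolding is_match_def by auto
  qed
qed

lemma compatible_matches_agree:
  assumes "is_match X G m" "is_match Y H p" "compatible X m Y p"
    and "l \<in> labels X" "l \<in> labels Y"
  shows "m l = p l"
proof (cases l)
  case (Cst c)
  then show ?thesis
    using assms unfolding is_match_def by auto
next
  case (Var v)
  then show ?thesis
    using assms unfolding compatible_def vars_def is_var_def by auto
qed

lemma is_match_join:
  assumes m: "is_match X G m" and p: "is_match Y H p" and "compatible X m Y p"
  shows "is_match (graph_union X Y) (graph_union G H) (match_join X m p)"
proof -
  have on_X: "match_join X m p l = m l" if "l \<in> labels X" for l
    using that by (simp add: match_join_def)
  have on_Y: "match_join X m p l = p l" if "l \<in> labels Y" for l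
    using that compatible_matches_agree[OF assms] by (simp add: match_join_def)
  have dom_X: "s \<in> labels X" "q \<in> labels X" "t \<in> labels X" if "(s, q, t) \<in> triples X" for s q t
    using that m unfolding is_match_def by blast+
  have dom_Y: "s \<in> labels Y" "q \<in> labels Y" "t \<in> labels Y" if "(s, q, t) \<in> triples Y" for s q t
    using that p unfolding is_match_def by blast+
  show ?thesis
    unfolding is_match_def
  proof (intro conjI allI impI ballI)
    show "dom (match_join X m p) = labels (graph_union X Y)"
      using is_match_dom[OF m] is_match_dom[OF p]
      by (auto simp: labels_graph_union match_join_def dom_def)
  next
    fix n assume "n \<in> nodes (graph_union X Y)"
    then show "\<exists>n'. match_join X m p n = Some n' \<and> n' \<in> nodes (graph_union G H)"
      using m p on_X on_Y unfolding is_match_def graph_union_def labels_def by auto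
  next
    fix s q t assume "(s, q, t) \<in> triples (graph_union X Y)"
    then consider "(s, q, t) \<in> triples X" | "(s, q, t) \<in> triples Y"
      by (auto simp: graph_union_def)
    then show "\<exists>s' q' t'. match_join X m p s = Some s' \<and> match_join X m p q = Some q' \<and>
        match_join X m p t = Some t' \<and> (s', q', t') \<in> triples (graph_union G H)"
    proof cases
      case 1
      then obtain s' q' t' where "m s = Some s'" "m q = Some q'" "m t = Some t'"
          "(s', q', t') \<in> triples G"
        using m unfolding is_match_def by blast
      then show ?thesis
        using on_X dom_X[OF 1] by (auto simp: graph_union_def)
    next
      case 2
      then obtain s' q' t' where "p s = Some s'" "p q = Some q'" "p t = Some t'"
          "(s', q', t') \<in> triples H"
        using p unfolding is_match_def by blast
      then show ?thesis
        using on_Y dom_Y[OF 2] by (auto simp: graph_union_def)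
    qed
  next
    fix c assume "Cst c \<in> labels (graph_union X Y)"
    then show "match_join X m p (Cst c) = Some (Cst c)"
      using m p on_X on_Y unfolding is_match_def labels_graph_union by auto
  qed
qed

lemma match_join_restrict:
  assumes "dom f = labels X \<union> labels Y"
  shows "match_join X (f |` labels X) (f |` labels Y) = f"
proof
  fix l
  show "match_join X (f |` labels X) (f |` labels Y) l = f l"
    using assms by (cases "f l") (auto simp: match_join_def restrict_map_def)
qed

lemma compatible_restrict: "compatible X (f |` labels X) Y (f |` labels Y)"
  by (simp add: compatible_def vars_def)

lemma matches_graph_union_eq_joins:
  assumes "wf_graph X" "wf_graph Y"
  shows "{f. is_match (graph_union X Y) G f} =
    {match_join X m p | m p. is_match X G m \<and> is_match Y G p \<and> compatible X m Y p}"
    (is "?union = ?joins")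
proof
  show "?joins \<subseteq> ?union"
    using is_match_join[where G = G and H = G] by (auto simp: graph_union_idem)
next
  show "?union \<subseteq> ?joins"
  proof
    fix f assume "f \<in> ?union"
    then have f: "is_match (graph_union X Y) G f" by simp
    have "is_match X G (f |` labels X)" "is_match Y G (f |` labels Y)"
      using is_match_restrict[OF f] assms by (auto simp: graph_union_def)
    moreover have "f = match_join X (f |` labels X) (f |` labels Y)"
      using match_join_restrict[symmetric] is_match_dom[OF f] by (simp add: labels_graph_union)
    ultimately show "f \<in> ?joins"
      using compatible_restrict by blast
  qed
qed

lemma pvalue_JOIN_Basic:
  assumes "wf_graph X" "wf_graph Y"
  shows "pvalue (JOIN (Basic X) (Basic Y)) G = pvalue (Basic (graph_union X Y)) G"
  using matches_graph_union_eq_joins[OF assms] by (simp add: Join_def graph_union_idem)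

theorem proposition3:
  fixes P1 P2 :: "('c, 'v) graph"
  assumes "wf_graph P1" and "wf_graph P2"
  shows "pat_equiv (Basic (graph_union P1 P2)) (JOIN (Basic P1) (Basic P2))
       \<and> pat_equiv (Basic (graph_union P1 P2)) (JOIN (Basic P2) (Basic P1))"
  using pvalue_JOIN_Basic[OF assms] pvalue_JOIN_Basic[OF assms(2,1)]
  by (simp add: pat_equiv_def graph_union_commute[of P2 P1])

end
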